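(* Let $I$ be a monomial ideal of $R=K[x_1,\ldots,x_d]$ ($K$ a field) and $r\in\mathbb{R}$, $r\ge 0$. Consider the following procedure (the Staircase algorithm). If $d=1$, output $\{x_1^{\min(\mathcal{V},1)}\}$. If $d\ge2$, initialize an empty output list and let StartPoints be the set of lattice points $\mathbf{a}\in\operatorname{hype}(I,r)\cap\mathbb{Z}^d$ with $a_{d-1}=\min(\mathcal{V},d-1)$ and $a_d=\max(\mathcal{V},d)$. For each $\mathbf{a}\in$ StartPoints: set $\mathbf{b}:=\mathbf{a}$; while $\mathbf{a}\in\operatorname{hype}(I,r)$, do the following: if $\mathbf{a}\in r\cdot NP(I)$, set $\mathbf{b}:=\mathbf{a}$ and then $\mathbf{a}:=\mathbf{a}-\mathbf{e}_d$; otherwise, if $\mathbf{b}\in r\cdot NP(I)$ append $\mathbf{x}^{\mathbf{b}}$ to the output, then set $\mathbf{b}:=\mathbf{a}$ and $\mathbf{a}:=\mathbf{a}+\mathbf{e}_{d-1}$. After the while loop ends, if $\mathbf{b}\in r\cdot NP(I)$ append $\mathbf{x}^{\mathbf{b}}$ to the output. Finally return the output list. If $d\in\{1,2\}$, this procedure returns a minimal set of monomial generators of $\overline{I^r}$. If $d\ge3$, it returns a (not necessarily minimal) set of monomial generators of $\overline{I^r}$.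
   Context: $\mathbb{N}$ denotes the non-negative integers, $\mathbf{x}^{\mathbf{a}}=x_1^{a_1}\cdots x_d^{a_d}$, and $\mathbf{e}_i$ is the $i$-th standard basis vector. $G(I)$ is the minimal monomial generating set of $I$. $NP(I)$ is the convex hull in $\mathbb{R}^d$ of $\{\mathbf{a}\in\mathbb{N}^d\mid \mathbf{x}^{\mathbf{a}}\in I\}$, and $r\cdot NP(I)=\{r\mathbf{v}\mid\mathbf{v}\in NP(I)\}$. For real $r\ge0$, $\overline{I^r}=(\{\mathbf{x}^{\mathbf{a}}\mid \mathbf{a}\in r\cdot NP(I)\cap\mathbb{N}^d\})$. Let $\mathcal{V}(I,r)=\{(\lceil ra_1\rceil,\ldots,\lceil ra_d\rceil)\mid \mathbf{x}^{\mathbf{a}}\in G(I)\}$, and for $1\le i\le d$ let $\min(\mathcal{V},i)=\min_{\alpha\in\mathcal{V}(I,r)}\alpha_i$, $\max(\mathcal{V},i)=\max_{\alpha\in\mathcal{V}(I,r)}\alpha_i$. The hyperrectangle is $\operatorname{hype}(I,r)=\prod_{i=1}^d[\min(\mathcal{V},i),\max(\mathcal{V},i)]$. *)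

theory Defs
  imports Complex_Main
begin

text \<open>Exponent vectors are functions on indices 0..d-1 (index i stands for the
variable x_(i+1)), required to vanish outside {0..<d}.  A monomial ideal of
K[x_1,...,x_d] is encoded by the set E of exponent vectors of the monomials it
contains (an up-closed subset of N^d); the field K plays no role.\<close>

definition supp_in :: "nat \<Rightarrow> (nat \<Rightarrow> 'a::zero) \<Rightarrow> bool" where
  "supp_in d a \<longleftrightarrow> (\<forall>i\<ge>d. a i = 0)"

definition monomial_ideal_exps :: "nat \<Rightarrow> (nat \<Rightarrow> nat) set \<Rightarrow> bool" where
  "monomial_ideal_exps d E \<longleftrightarrow>
     (\<forall>a\<in>E. supp_in d a) \<and>
     (\<forall>a\<in>E. \<forall>c. supp_in d c \<and> (\<forall>i. a i \<le> c i) \<longrightarrow> c \<in> E)"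

definition min_gens :: "(nat \<Rightarrow> nat) set \<Rightarrow> (nat \<Rightarrow> nat) set" where
  "min_gens E = {a \<in> E. \<forall>b\<in>E. (\<forall>i. b i \<le> a i) \<longrightarrow> b = a}"

definition newton_polyhedron :: "(nat \<Rightarrow> nat) set \<Rightarrow> (nat \<Rightarrow> real) set" where
  "newton_polyhedron E = {v. \<exists>S u. finite S \<and> S \<noteq> {} \<and> S \<subseteq> E \<and> (\<forall>a\<in>S. 0 \<le> u a)
       \<and> sum u S = 1 \<and> v = (\<lambda>i. \<Sum>a\<in>S. u a * real (a i))}"

definition scaled_NP :: "real \<Rightarrow> (nat \<Rightarrow> nat) set \<Rightarrow> (nat \<Rightarrow> real) set" where
  "scaled_NP r E = (\<lambda>v i. r * v i) ` newton_polyhedron E"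

text \<open>Exponent set of the integral closure ideal of I^r: monomials divisible by some x^a
with a in r*NP(I) \<inter> N^d.\<close>
definition int_closure_exps :: "nat \<Rightarrow> (nat \<Rightarrow> nat) set \<Rightarrow> real \<Rightarrow> (nat \<Rightarrow> nat) set" where
  "int_closure_exps d E r = {c. supp_in d c \<and>
     (\<exists>a. supp_in d a \<and> (\<lambda>i. real (a i)) \<in> scaled_NP r E \<and> (\<forall>i. a i \<le> c i))}"

definition Vset :: "(nat \<Rightarrow> nat) set \<Rightarrow> real \<Rightarrow> (nat \<Rightarrow> int) set" where
  "Vset E r = (\<lambda>a i. \<lceil>r * real (a i)\<rceil>) ` min_gens E"

definition minV :: "(nat \<Rightarrow> nat) set \<Rightarrow> real \<Rightarrow> nat \<Rightarrow> int" where
  "minV E r i = Min ((\<lambda>v. v i) ` Vset E r)"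

definition maxV :: "(nat \<Rightarrow> nat) set \<Rightarrow> real \<Rightarrow> nat \<Rightarrow> int" where
  "maxV E r i = Max ((\<lambda>v. v i) ` Vset E r)"

definition hype :: "nat \<Rightarrow> (nat \<Rightarrow> nat) set \<Rightarrow> real \<Rightarrow> (nat \<Rightarrow> int) set" where
  "hype d E r = {a. supp_in d a \<and> (\<forall>i<d. minV E r i \<le> a i \<and> a i \<le> maxV E r i)}"

definition in_rNP :: "real \<Rightarrow> (nat \<Rightarrow> nat) set \<Rightarrow> (nat \<Rightarrow> int) \<Rightarrow> bool" where
  "in_rNP r E a \<longleftrightarrow> (\<lambda>i. real_of_int (a i)) \<in> scaled_NP r E"

text \<open>Coordinate d-1 is x_d, coordinate d-2 is x_(d-1).  The loop is
guarded by d \<ge> 2 (the only case where it is run) and by box bounds lo/hi.\<close>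
function stair_loop :: "nat \<Rightarrow> (nat \<Rightarrow> int) \<Rightarrow> (nat \<Rightarrow> int) \<Rightarrow> ((nat \<Rightarrow> int) \<Rightarrow> bool)
    \<Rightarrow> (nat \<Rightarrow> int) \<Rightarrow> (nat \<Rightarrow> int) \<Rightarrow> (nat \<Rightarrow> int) list \<Rightarrow> (nat \<Rightarrow> int) list" where
  "stair_loop d lo hi P a b out =
     (if 2 \<le> d \<and> supp_in d a \<and> (\<forall>i<d. lo i \<le> a i \<and> a i \<le> hi i) then
        (if P a then stair_loop d lo hi P (a(d - 1 := a (d - 1) - 1)) a out
         else stair_loop d lo hi P (a(d - 2 := a (d - 2) + 1)) a (if P b then out @ [b] else out))
      else (if P b then out @ [b] else out))"
  by pat_completeness auto
termination
proof (relation "measure (\<lambda>(d, lo, hi, P, a, b, out).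
          nat (a (d - 1) - lo (d - 1) + 1) + nat (hi (d - 2) - a (d - 2) + 1))", goal_cases)
  case 1 then show ?case by simp
next
  case (2 d lo hi P a b out)
  have "d - 1 < d" "d - 2 \<noteq> d - 1" using 2 by auto
  with 2 show ?case by auto
next
  case (3 d lo hi P a b out)
  have "d - 2 < d" "d - 2 \<noteq> d - 1" using 3 by auto
  with 3 show ?case by auto
qed

definition start_points :: "nat \<Rightarrow> (nat \<Rightarrow> nat) set \<Rightarrow> real \<Rightarrow> (nat \<Rightarrow> int) set" where
  "start_points d E r = {a \<in> hype d E r. a (d - 2) = minV E r (d - 2) \<and> a (d - 1) = maxV E r (d - 1)}"

text \<open>The output
list is the concatenation of the loop outputs over all start points; as the theorem only
concerns the set of returned monomials, the iteration order is irrelevant.\<close>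
definition staircase :: "nat \<Rightarrow> (nat \<Rightarrow> nat) set \<Rightarrow> real \<Rightarrow> (nat \<Rightarrow> int) set" where
  "staircase d E r =
     (if d = 1 then {(\<lambda>i. if i = 0 then minV E r 0 else 0)}
      else (\<Union>a\<in>start_points d E r.
              set (stair_loop d (minV E r) (maxV E r) (in_rNP r E) a a [])))"

end

theory Submission
  imports Defs
begin

(*
  A lattice point of r NP(I) dominates r y for a convex combination y of minimal generators
  of I, so its i-th coordinate is at least min(V,i); and since r NP(I) is closed under
  adding nonnegative vectors, a coordinate above max(V,i) can be lowered by one without leaving
  r NP(I). Hence the minimal lattice points of r NP(I), which are the minimal generators of the
  integral closure, lie in hype(I,r), and inside hype(I,r) membership in r NP(I) is upward closed.

  In the column of such a minimal point c, the walk starting at the top left goes down while it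
  is in r NP(I) and right while it is not. It can pass c neither to the right (c would lie below
  the current point) nor downwards (the point just below c is not in r NP(I)), so it records c.
  For d = 2 the walk keeps the invariant that every point of r NP(I) strictly to the left of the
  current point lies strictly above it; as a point is recorded only right after the walk has
  stepped down out of r NP(I), every recorded point is minimal.
*)

section \<open>Minimal elements\<close>

definition is_minimal :: "('a::order \<Rightarrow> bool) \<Rightarrow> 'a \<Rightarrow> bool" where
  "is_minimal Q c \<longleftrightarrow> Q c \<and> (\<forall>c'. Q c' \<longrightarrow> c' \<le> c \<longrightarrow> c' = c)"

lemma ex_is_minimal_le:
  fixes m :: "'a::order \<Rightarrow> nat"
  assumes "Q a" and m_strict_mono: "\<And>x y. Q x \<Longrightarrow> Q y \<Longrightarrow> y < x \<Longrightarrow> m y < m x"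
  shows "\<exists>c. is_minimal Q c \<and> c \<le> a"
proof -
  obtain c where c: "Q c \<and> c \<le> a" and least: "\<And>y. Q y \<and> y \<le> a \<Longrightarrow> m c \<le> m y"
    using ex_has_least_nat[of "\<lambda>c. Q c \<and> c \<le> a" a m] assms(1) by blast
  have "c' = c" if "Q c'" "c' \<le> c" for c'
  proof (rule ccontr)
    assume "c' \<noteq> c"
    with that c have "m c' < m c" by (intro m_strict_mono) auto
    moreover have "m c \<le> m c'" using c that by (intro least) (blast intro: order.trans)
    ultimately show False by simp
  qed
  then show ?thesis unfolding is_minimal_def using c by blast
qed

lemma is_minimal_iff_eq_least:
  assumes "Q m" and "\<And>c. Q c \<Longrightarrow> m \<le> c"
  shows "is_minimal Q c \<longleftrightarrow> c = m"
  using assms unfolding is_minimal_def by (blast intro: order.antisym)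

lemma is_minimal_not_decrease:
  fixes c :: "'a \<Rightarrow> int"
  assumes "is_minimal P c"
  shows "\<not> P (c(i := c i - 1))"
proof
  assume "P (c(i := c i - 1))"
  moreover have "c(i := c i - 1) \<le> c" by (simp add: le_fun_def)
  ultimately have "c(i := c i - 1) = c" using assms by (simp add: is_minimal_def)
  then have "c i - 1 = c i" by (metis fun_upd_same)
  then show False by simp
qed

lemma finite_antichain:
  fixes A :: "('a \<Rightarrow> nat) set"
  assumes "finite I" and "\<forall>a\<in>A. \<forall>j. j \<notin> I \<longrightarrow> a j = 0"
    and "\<forall>a\<in>A. \<forall>b\<in>A. a \<le> b \<longrightarrow> a = b"
  shows "finite A"
  using assms
proof (induction I arbitrary: A rule: finite_psubset_induct)
  case (psubset I)
  show ?case
  proof (cases "A = {}")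
    case False
    then obtain a0 where a0: "a0 \<in> A" by blast
    \<comment> \<open>Every other element lies below a0 in some coordinate i, and a slice a i = v
      is an antichain supported on I - {i}.\<close>
    have slice_finite: "finite {a\<in>A. a i = v}" if "i \<in> I" for i v
    proof -
      let ?S = "{a\<in>A. a i = v}"
      have le_iff: "a(i := 0) \<le> b(i := 0) \<longleftrightarrow> a \<le> b" if "a \<in> ?S" "b \<in> ?S" for a b
      proof
        assume le0: "a(i := 0) \<le> b(i := 0)"
        show "a \<le> b"
        proof (rule le_funI)
          fix j show "a j \<le> b j"
            using that le_funD[OF le0, of j] by (cases "j = i") auto
        qed
      qed (auto simp: le_fun_def)
      have "finite ((\<lambda>a. a(i := 0)) ` ?S)"
      proof (rule psubset.IH)
        show "I - {i} \<subset> I" using that by blast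
        show "\<forall>a\<in>(\<lambda>a. a(i := 0)) ` ?S. \<forall>j. j \<notin> I - {i} \<longrightarrow> a j = 0"
        proof (intro ballI allI impI)
          fix x j assume "x \<in> (\<lambda>a. a(i := 0)) ` ?S" "j \<notin> I - {i}"
          then show "x j = 0" using psubset.prems(1) by (cases "j = i") auto
        qed
        show "\<forall>x\<in>(\<lambda>a. a(i := 0)) ` ?S. \<forall>y\<in>(\<lambda>a. a(i := 0)) ` ?S. x \<le> y \<longrightarrow> x = y"
        proof (intro ballI impI)
          fix x y assume "x \<in> (\<lambda>a. a(i := 0)) ` ?S" "y \<in> (\<lambda>a. a(i := 0)) ` ?S" "x \<le> y"
          then obtain a b where a: "a \<in> ?S" "x = a(i := 0)" and b: "b \<in> ?S" "y = b(i := 0)"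
            by (auto simp only: image_iff)
          with \<open>x \<le> y\<close> have "a \<le> b" using le_iff[OF a(1) b(1)] by simp
          then show "x = y" using psubset.prems(2) a b by auto
        qed
      qed
      moreover have "inj_on (\<lambda>a. a(i := 0)) ?S"
      proof (rule inj_onI)
        fix a b assume "a \<in> ?S" "b \<in> ?S" "a(i := 0) = b(i := 0)"
        then show "a = b" using le_iff[of a b] le_iff[of b a] by (simp add: order.antisym)
      qed
      ultimately show ?thesis by (rule finite_imageD)
    qed
    have "A \<subseteq> insert a0 (\<Union>i\<in>I. \<Union>v<a0 i. {a\<in>A. a i = v})"
    proof
      fix a assume a: "a \<in> A"
      show "a \<in> insert a0 (\<Union>i\<in>I. \<Union>v<a0 i. {a\<in>A. a i = v})"
      proof (cases "a0 \<le> a")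
        case True
        then have "a0 = a" by (rule psubset.prems(2)[rule_format, OF a0 a])
        then show ?thesis by simp
      next
        case False
        then obtain i where i: "a i < a0 i" by (auto simp: le_fun_def not_le)
        then have "i \<in> I" using psubset.prems(1) a0 by (metis less_zeroE)
        with i a show ?thesis by blast
      qed
    qed
    moreover have "finite (insert a0 (\<Union>i\<in>I. \<Union>v<a0 i. {a\<in>A. a i = v}))"
      using psubset.hyps slice_finite by auto
    ultimately show ?thesis by (rule finite_subset)
  qed simp
qed

section \<open>Newton polyhedra\<close>

lemma min_gens_eq_is_minimal: "min_gens E = Collect (is_minimal (\<lambda>a. a \<in> E))"
  by (auto simp: min_gens_def is_minimal_def le_fun_def)

lemma monomial_ideal_exps_supp_in:
  "monomial_ideal_exps d E \<Longrightarrow> a \<in> E \<Longrightarrow> supp_in d a"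
  unfolding monomial_ideal_exps_def by blast

lemma monomial_ideal_exps_upward_closed:
  "monomial_ideal_exps d E \<Longrightarrow> a \<in> E \<Longrightarrow> a \<le> c \<Longrightarrow> supp_in d c \<Longrightarrow> c \<in> E"
  unfolding monomial_ideal_exps_def le_fun_def by blast

lemma ex_min_gens_le:
  assumes E: "monomial_ideal_exps d E" and a: "a \<in> E"
  shows "\<exists>g\<in>min_gens E. g \<le> a"
proof -
  have "sum y {..<d} < sum x {..<d}" if "x \<in> E" "y \<in> E" "y < x" for x y
  proof (rule sum_strict_mono_ex1)
    show "\<forall>i\<in>{..<d}. y i \<le> x i" using \<open>y < x\<close> by (simp add: le_funD less_imp_le)
    obtain j where j: "y j < x j" using \<open>y < x\<close> by (auto simp: less_fun_def le_fun_def not_le)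
    then have "j < d"
      using monomial_ideal_exps_supp_in[OF E \<open>x \<in> E\<close>] unfolding supp_in_def
      by (metis not_le not_less0)
    with j show "\<exists>i\<in>{..<d}. y i < x i" by blast
  qed simp
  then show ?thesis
    using ex_is_minimal_le[of "\<lambda>a. a \<in> E" a "\<lambda>x. sum x {..<d}"] a
    by (auto simp: min_gens_eq_is_minimal)
qed

lemma newton_polyhedron_convex_combination:
  fixes f :: "'b \<Rightarrow> nat \<Rightarrow> nat"
  assumes "finite J" "J \<noteq> {}" "f ` J \<subseteq> E" "\<forall>j\<in>J. 0 \<le> w j" "sum w J = 1"
  shows "(\<lambda>i. \<Sum>j\<in>J. w j * real (f j i)) \<in> newton_polyhedron E"
proof -
  define u where "u a = sum w {j\<in>J. f j = a}" for a
  have "sum u (f ` J) = 1"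
    using assms(5) sum.image_gen[OF assms(1), of w f] by (simp add: u_def)
  moreover have "(\<Sum>j\<in>J. w j * real (f j i)) = (\<Sum>a\<in>f ` J. u a * real (a i))" for i
  proof -
    have "(\<Sum>j\<in>J. w j * real (f j i)) = (\<Sum>a\<in>f ` J. \<Sum>j\<in>{j\<in>J. f j = a}. w j * real (f j i))"
      using sum.image_gen[OF assms(1), of "\<lambda>j. w j * real (f j i)" f] by simp
    also have "\<dots> = (\<Sum>a\<in>f ` J. u a * real (a i))"
      by (auto simp: u_def sum_distrib_right intro!: sum.cong)
    finally show ?thesis .
  qed
  ultimately show ?thesis
    unfolding newton_polyhedron_def using assms
    by (intro CollectI exI[of _ "f ` J"] exI[of _ u]) (auto simp: u_def intro!: sum_nonneg)
qed

lemma newton_polyhedron_mono: "E \<subseteq> F \<Longrightarrow> newton_polyhedron E \<subseteq> newton_polyhedron F"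
  unfolding newton_polyhedron_def by blast

lemma newton_polyhedron_supp_in:
  assumes "monomial_ideal_exps d E" "v \<in> newton_polyhedron E"
  shows "supp_in d v"
proof -
  obtain S u where "S \<subseteq> E" and v: "v = (\<lambda>i. \<Sum>a\<in>S. u a * real (a i))"
    using assms(2) unfolding newton_polyhedron_def by blast
  then have "\<forall>a\<in>S. \<forall>i\<ge>d. a i = 0"
    using monomial_ideal_exps_supp_in[OF assms(1)] unfolding supp_in_def by blast
  then show ?thesis unfolding supp_in_def v by (auto intro!: sum.neutral)
qed

lemma newton_polyhedron_ex_coordinate_le:
  assumes "y \<in> newton_polyhedron G"
  shows "\<exists>g\<in>G. real (g i) \<le> y i"
proof -
  obtain S u where S: "finite S" "S \<noteq> {}" "S \<subseteq> G" "\<forall>a\<in>S. 0 \<le> u a" "sum u S = 1"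
    and y: "y = (\<lambda>i. \<Sum>a\<in>S. u a * real (a i))"
    using assms unfolding newton_polyhedron_def by blast
  have "Min ((\<lambda>e. e i) ` S) \<in> (\<lambda>e. e i) ` S" using S(1,2) by (intro Min_in) auto
  then obtain g where g: "g \<in> S" "g i = Min ((\<lambda>e. e i) ` S)" by auto
  have "(\<Sum>a\<in>S. u a * real (g i)) \<le> y i"
    unfolding y using S g by (auto intro!: sum_mono mult_left_mono)
  with S(3,5) g(1) show ?thesis by (auto simp flip: sum_distrib_right)
qed

lemma newton_polyhedron_ex_coordinate_ge:
  assumes "y \<in> newton_polyhedron G"
  shows "\<exists>g\<in>G. y i \<le> real (g i)"
proof -
  obtain S u where S: "finite S" "S \<noteq> {}" "S \<subseteq> G" "\<forall>a\<in>S. 0 \<le> u a" "sum u S = 1"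
    and y: "y = (\<lambda>i. \<Sum>a\<in>S. u a * real (a i))"
    using assms unfolding newton_polyhedron_def by blast
  have "Max ((\<lambda>e. e i) ` S) \<in> (\<lambda>e. e i) ` S" using S(1,2) by (intro Max_in) auto
  then obtain g where g: "g \<in> S" "g i = Max ((\<lambda>e. e i) ` S)" by auto
  have "y i \<le> (\<Sum>a\<in>S. u a * real (g i))"
    unfolding y using S g by (auto intro!: sum_mono mult_left_mono)
  with S(3,5) g(1) show ?thesis by (auto simp flip: sum_distrib_right)
qed

lemma newton_polyhedron_add_coordinate:
  assumes E: "monomial_ideal_exps d E" and x: "x \<in> newton_polyhedron E"
    and i: "i < d" and t: "t \<ge> 0"
  shows "x(i := x i + t) \<in> newton_polyhedron E"
proof -
  obtain S u where S: "finite S" "S \<noteq> {}" "S \<subseteq> E" "\<forall>a\<in>S. 0 \<le> u a" "sum u S = 1"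
    and x_eq: "x = (\<lambda>i. \<Sum>a\<in>S. u a * real (a i))"
    using x unfolding newton_polyhedron_def by blast
  \<comment> \<open>Mix every point a with weight 1 - l and its shift a + K e_i with weight l, where l K = t.\<close>
  define K :: nat where "K = nat \<lceil>t\<rceil> + 1"
  have K: "t < real K" "1 \<le> real K" unfolding K_def by linarith+
  define l where "l = t / real K"
  have l: "0 \<le> l" "l \<le> 1" "l * real K = t" using K t by (auto simp: l_def)
  define J where "J = S \<times> (UNIV :: bool set)"
  define f where "f = (\<lambda>(a::nat\<Rightarrow>nat, shift). if shift then a(i := a i + K) else a)"
  define w where "w = (\<lambda>(a::nat\<Rightarrow>nat, shift). if shift then u a * l else u a * (1 - l))"
  have sum_J: "sum g J = (\<Sum>a\<in>S. g (a, True) + g (a, False))" for g :: "_ \<Rightarrow> real"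
    unfolding J_def sum.cartesian_product' by (simp add: UNIV_bool add.commute)
  have "a(i := a i + K) \<in> E" if "a \<in> S" for a
  proof (rule monomial_ideal_exps_upward_closed[OF E])
    show "a \<in> E" using that S(3) by blast
    then show "supp_in d (a(i := a i + K))"
      using monomial_ideal_exps_supp_in[OF E] i by (simp add: supp_in_def)
  qed (simp add: le_fun_def)
  then have "f ` J \<subseteq> E" using S(3) by (auto simp: J_def f_def)
  moreover have "sum w J = 1" using S(5) unfolding sum_J w_def by (simp add: algebra_simps)
  moreover have "\<forall>j\<in>J. 0 \<le> w j" using S(4) l by (auto simp: J_def w_def)
  ultimately have "(\<lambda>j. \<Sum>p\<in>J. w p * real (f p j)) \<in> newton_polyhedron E"
    using S(1,2) by (intro newton_polyhedron_convex_combination) (auto simp: J_def)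
  moreover have "(\<lambda>j. \<Sum>p\<in>J. w p * real (f p j)) = x(i := x i + t)"
  proof
    fix j
    have "(\<Sum>p\<in>J. w p * real (f p j))
        = (\<Sum>a\<in>S. u a * real (a j) + (if j = i then u a * (l * real K) else 0))"
      unfolding sum_J by (intro sum.cong) (auto simp: w_def f_def algebra_simps)
    also have "\<dots> = (x(i := x i + t)) j"
      using S(5) l(3) by (simp add: x_eq sum.distrib flip: sum_distrib_right)
    finally show "(\<Sum>p\<in>J. w p * real (f p j)) = (x(i := x i + t)) j" .
  qed
  ultimately show ?thesis by simp
qed

lemma newton_polyhedron_upward_closed:
  assumes E: "monomial_ideal_exps d E" and x: "x \<in> newton_polyhedron E"
    and "x \<le> w" and w: "supp_in d w"
  shows "w \<in> newton_polyhedron E"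
proof -
  define v where "v n = (\<lambda>i. if i < n then w i else x i)" for n
  have raised: "v n \<in> newton_polyhedron E" if "n \<le> d" for n
    using that
  proof (induction n)
    case 0
    then show ?case using x by (simp add: v_def)
  next
    case (Suc n)
    have "(v n)(n := v n n + (w n - x n)) \<in> newton_polyhedron E"
      using Suc \<open>x \<le> w\<close> by (intro newton_polyhedron_add_coordinate[OF E]) (auto simp: le_fun_def)
    also have "(v n)(n := v n n + (w n - x n)) = v (Suc n)"
      by (auto simp: v_def fun_eq_iff)
    finally show ?case .
  qed
  have "v d = w"
    using newton_polyhedron_supp_in[OF E x] w by (auto simp: v_def fun_eq_iff supp_in_def)
  with raised[of d] show ?thesis by simp
qed

lemma scaled_NP_upward_closed:
  assumes E: "monomial_ideal_exps d E" and "r > 0" and v: "v \<in> scaled_NP r E"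
    and "v \<le> w" and "supp_in d w"
  shows "w \<in> scaled_NP r E"
proof -
  obtain x where x: "x \<in> newton_polyhedron E" and v_eq: "v = (\<lambda>i. r * x i)"
    using v unfolding scaled_NP_def by blast
  have "x \<le> (\<lambda>i. w i / r)"
    using \<open>v \<le> w\<close> \<open>r > 0\<close> by (simp add: le_fun_def v_eq pos_le_divide_eq mult.commute)
  moreover have "supp_in d (\<lambda>i. w i / r)" using \<open>supp_in d w\<close> by (simp add: supp_in_def)
  ultimately have "(\<lambda>i. w i / r) \<in> newton_polyhedron E"
    by (rule newton_polyhedron_upward_closed[OF E x])
  moreover have "w = (\<lambda>v i. r * v i) (\<lambda>i. w i / r)" using \<open>r > 0\<close> by simp
  ultimately show ?thesis unfolding scaled_NP_def by (rule rev_image_eqI[where f="\<lambda>v i. r * v i"])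
qed

lemma newton_polyhedron_ex_min_gens_le:
  assumes E: "monomial_ideal_exps d E" and x: "x \<in> newton_polyhedron E"
  shows "\<exists>y\<in>newton_polyhedron (min_gens E). y \<le> x"
proof -
  obtain S u where S: "finite S" "S \<noteq> {}" "S \<subseteq> E" "\<forall>a\<in>S. 0 \<le> u a" "sum u S = 1"
    and x_eq: "x = (\<lambda>i. \<Sum>a\<in>S. u a * real (a i))"
    using x unfolding newton_polyhedron_def by blast
  obtain g where g: "\<And>a. a \<in> S \<Longrightarrow> g a \<in> min_gens E \<and> g a \<le> a"
    using ex_min_gens_le[OF E] S(3) by (metis subsetD)
  have "(\<lambda>i. \<Sum>a\<in>S. u a * real (g a i)) \<in> newton_polyhedron (min_gens E)"
    using S g by (intro newton_polyhedron_convex_combination) auto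
  moreover have "(\<lambda>i. \<Sum>a\<in>S. u a * real (g a i)) \<le> x"
    unfolding x_eq le_fun_def using S(4) g
    by (auto intro!: sum_mono mult_left_mono simp: le_fun_def)
  ultimately show ?thesis by blast
qed

section \<open>The staircase walk\<close>

definition in_box :: "nat \<Rightarrow> (nat \<Rightarrow> int) \<Rightarrow> (nat \<Rightarrow> int) \<Rightarrow> (nat \<Rightarrow> int) \<Rightarrow> bool" where
  "in_box d lo hi a \<longleftrightarrow> supp_in d a \<and> (\<forall>i<d. lo i \<le> a i \<and> a i \<le> hi i)"

lemma hype_iff_in_box: "c \<in> hype d E r \<longleftrightarrow> in_box d (minV E r) (maxV E r) c"
  by (simp add: hype_def in_box_def)

lemma in_box_between:
  assumes "in_box d lo hi b" "supp_in d a" "\<And>i. lo i \<le> c i" "c \<le> a" "a \<le> b"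
  shows "in_box d lo hi a"
  unfolding in_box_def
proof (intro conjI allI impI)
  fix i assume "i < d"
  show "lo i \<le> a i" using assms(3)[of i] le_funD[OF \<open>c \<le> a\<close>, of i] by simp
  have "b i \<le> hi i" using assms(1) \<open>i < d\<close> by (simp add: in_box_def)
  with le_funD[OF \<open>a \<le> b\<close>, of i] show "a i \<le> hi i" by simp
qed (rule \<open>supp_in d a\<close>)

declare stair_loop.simps [simp del]

lemma stair_loop_unfold:
  assumes "2 \<le> d"
  shows "stair_loop d lo hi P a b out =
     (if in_box d lo hi a then
        (if P a then stair_loop d lo hi P (a(d - 1 := a (d - 1) - 1)) a out
         else stair_loop d lo hi P (a(d - 2 := a (d - 2) + 1)) a (if P b then out @ [b] else out))
      else (if P b then out @ [b] else out))"
  using assms by (simp add: stair_loop.simps[of d] in_box_def)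

lemma stair_loop_invariant:
  assumes "2 \<le> d" and "Inv a b out"
    and down: "\<And>a b out. in_box d lo hi a \<Longrightarrow> P a \<Longrightarrow> Inv a b out \<Longrightarrow>
      Inv (a(d - 1 := a (d - 1) - 1)) a out"
    and right: "\<And>a b out. in_box d lo hi a \<Longrightarrow> \<not> P a \<Longrightarrow> Inv a b out \<Longrightarrow>
      Inv (a(d - 2 := a (d - 2) + 1)) a (if P b then out @ [b] else out)"
    and stop: "\<And>a b out. \<not> in_box d lo hi a \<Longrightarrow> Inv a b out \<Longrightarrow>
      Q (if P b then out @ [b] else out)"
  shows "Q (stair_loop d lo hi P a b out)"
proof -
  \<comment> \<open>The induction rule of stair_loop varies all its arguments, so the fixed ones are
    generalised and then pinned down by equations.\<close>
  have "Inv a b out \<Longrightarrow> Q (stair_loop d' lo' hi' P' a b out)"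
    if "d' = d" "lo' = lo" "hi' = hi" "P' = P" for d' lo' hi' P' a b out
    using that
  proof (induction d' lo' hi' P' a b out rule: stair_loop.induct)
    case (1 d' lo' hi' P' a b out)
    note inv = "1.prems"(1) and params = "1.prems"(2-5)
    have IH_down: "in_box d lo hi a \<Longrightarrow> P a \<Longrightarrow>
        Q (stair_loop d lo hi P (a(d - 1 := a (d - 1) - 1)) a out)"
      using "1.IH"(1) \<open>2 \<le> d\<close> down[OF _ _ inv] unfolding params in_box_def by blast
    have IH_right: "in_box d lo hi a \<Longrightarrow> \<not> P a \<Longrightarrow>
        Q (stair_loop d lo hi P (a(d - 2 := a (d - 2) + 1)) a (if P b then out @ [b] else out))"
      using "1.IH"(2) \<open>2 \<le> d\<close> right[OF _ _ inv] unfolding params in_box_def by blast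
    show ?case
      unfolding params stair_loop_unfold[OF \<open>2 \<le> d\<close>, of lo hi P a]
      using IH_down IH_right stop[OF _ inv] by simp
  qed
  with assms(2) show ?thesis by blast
qed

lemma stair_loop_outputs_in_box:
  assumes "2 \<le> d" and "in_box d lo hi a"
  shows "\<forall>x\<in>set (stair_loop d lo hi P a a []). P x \<and> in_box d lo hi x"
proof (rule stair_loop_invariant[OF \<open>2 \<le> d\<close>])
  let ?out_ok = "\<lambda>out. \<forall>x\<in>set out. P x \<and> in_box d lo hi x"
  let ?Inv = "\<lambda>a b out. ?out_ok out \<and> (P b \<longrightarrow> in_box d lo hi b)"
  show "?Inv a a []" using assms(2) by simp
  fix a b out
  show "?Inv (a(d - 1 := a (d - 1) - 1)) a out" if "in_box d lo hi a" "?Inv a b out"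
    using that by simp
  show "?Inv (a(d - 2 := a (d - 2) + 1)) a (if P b then out @ [b] else out)"
    if "in_box d lo hi a" "?Inv a b out"
    using that by simp
  show "?out_ok (if P b then out @ [b] else out)" if "?Inv a b out"
    using that by simp
qed

definition upper_left :: "nat \<Rightarrow> (nat \<Rightarrow> int) \<Rightarrow> (nat \<Rightarrow> int) \<Rightarrow> (nat \<Rightarrow> int) \<Rightarrow> (nat \<Rightarrow> int) \<Rightarrow> bool"
  where "upper_left d lo hi c a \<longleftrightarrow> (\<forall>i. i \<noteq> d - 2 \<longrightarrow> i \<noteq> d - 1 \<longrightarrow> a i = c i)
    \<and> lo (d - 2) \<le> a (d - 2) \<and> a (d - 2) \<le> c (d - 2)
    \<and> c (d - 1) \<le> a (d - 1) \<and> a (d - 1) \<le> hi (d - 1)"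

lemma upper_left_in_box:
  assumes "2 \<le> d" "in_box d lo hi c" "upper_left d lo hi c a"
  shows "in_box d lo hi a"
proof -
  have "a i = 0" if "d \<le> i" for i
  proof -
    have "a i = c i" using assms that unfolding upper_left_def by auto
    with assms(2) that show ?thesis unfolding in_box_def supp_in_def by simp
  qed
  moreover have "lo i \<le> a i \<and> a i \<le> hi i" if "i < d" for i
  proof -
    consider "i = d - 2" | "i = d - 1" | "i \<noteq> d - 2" "i \<noteq> d - 1" by blast
    then show ?thesis
      using assms(2,3) that unfolding upper_left_def in_box_def by cases force+
  qed
  ultimately show ?thesis unfolding in_box_def supp_in_def by blast
qed

lemma upper_left_le: "upper_left d lo hi c a \<Longrightarrow> a (d - 1) \<le> c (d - 1) \<Longrightarrow> a \<le> c"
  unfolding upper_left_def le_fun_def by (metis order.refl)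

lemma upper_left_ge: "upper_left d lo hi c a \<Longrightarrow> c (d - 2) \<le> a (d - 2) \<Longrightarrow> c \<le> a"
  unfolding upper_left_def le_fun_def by (metis order.refl)

lemma minimal_in_stair_loop:
  assumes "2 \<le> d"
    and up: "\<And>a c. P a \<Longrightarrow> a \<le> c \<Longrightarrow> in_box d lo hi c \<Longrightarrow> P c"
    and c: "is_minimal P c" and c_box: "in_box d lo hi c"
    and start: "s = c(d - 2 := lo (d - 2), d - 1 := hi (d - 1))"
  shows "c \<in> set (stair_loop d lo hi P s s [])"
proof -
  let ?x = "d - 2" and ?y = "d - 1"
  have xy: "?x \<noteq> ?y" "?x < d" "?y < d" using \<open>2 \<le> d\<close> by auto
  have "P c" and c_least: "\<And>a. P a \<Longrightarrow> a \<le> c \<Longrightarrow> a = c"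
    using c unfolding is_minimal_def by auto
  \<comment> \<open>Until it records c, the walk stays upper left of c or is one step below c.\<close>
  let ?hit = "\<lambda>a b. a = c(?y := c ?y - 1) \<and> b = c"
  show ?thesis
  proof (rule stair_loop_invariant[OF \<open>2 \<le> d\<close>,
        where Inv = "\<lambda>a b out. c \<in> set out \<or> upper_left d lo hi c a \<or> ?hit a b"])
    show "c \<in> set [] \<or> upper_left d lo hi c s \<or> ?hit s s"
      using c_box xy unfolding start upper_left_def in_box_def by simp
  next
    fix a b out
    assume "in_box d lo hi a" "P a" and inv: "c \<in> set out \<or> upper_left d lo hi c a \<or> ?hit a b"
    let ?a' = "a(?y := a ?y - 1)"
    show "c \<in> set out \<or> upper_left d lo hi c ?a' \<or> ?hit ?a' a"
    proof (cases "c \<in> set out")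
      case False
      have "a \<noteq> c(?y := c ?y - 1)" using is_minimal_not_decrease[OF c] \<open>P a\<close> by blast
      with inv False have "upper_left d lo hi c a" by blast
      show ?thesis
      proof (cases "a ?y \<le> c ?y")
        case True
        then have "a = c" using c_least \<open>P a\<close> upper_left_le \<open>upper_left d lo hi c a\<close> by blast
        then show ?thesis by simp
      next
        case False
        then have "upper_left d lo hi c ?a'"
          using \<open>upper_left d lo hi c a\<close> xy unfolding upper_left_def by auto
        then show ?thesis by blast
      qed
    qed simp
  next
    fix a b out
    assume "in_box d lo hi a" "\<not> P a" and inv: "c \<in> set out \<or> upper_left d lo hi c a \<or> ?hit a b"
    let ?a' = "a(?x := a ?x + 1)" and ?out' = "if P b then out @ [b] else out"
    have "c \<in> set ?out'" if "c \<in> set out \<or> ?hit a b" using that \<open>P c\<close> by auto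
    moreover have "upper_left d lo hi c ?a'" if "upper_left d lo hi c a"
    proof -
      have "a ?x < c ?x"
        using upper_left_ge[OF that] up[OF \<open>P c\<close>] \<open>in_box d lo hi a\<close> \<open>\<not> P a\<close> by (meson not_le)
      with that xy show ?thesis unfolding upper_left_def by auto
    qed
    ultimately show "c \<in> set ?out' \<or> upper_left d lo hi c ?a' \<or> ?hit ?a' a" using inv by blast
  next
    fix a b out
    assume "\<not> in_box d lo hi a" and "c \<in> set out \<or> upper_left d lo hi c a \<or> ?hit a b"
    then show "c \<in> set (if P b then out @ [b] else out)"
      using upper_left_in_box[OF \<open>2 \<le> d\<close> c_box] \<open>P c\<close> by auto
  qed
qed

lemma supp_in_2_leI:
  fixes a b :: "nat \<Rightarrow> 'a::{order,zero}"
  assumes "supp_in 2 a" "supp_in 2 b" "a 0 \<le> b 0" "a 1 \<le> b 1"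
  shows "a \<le> b"
proof (rule le_funI)
  fix i :: nat
  consider "i = 0" | "i = 1" | "2 \<le> i" by linarith
  then show "a i \<le> b i" using assms by cases (auto simp: supp_in_def)
qed

definition left_points_above :: "((nat \<Rightarrow> int) \<Rightarrow> bool) \<Rightarrow> (nat \<Rightarrow> int) \<Rightarrow> bool" where
  "left_points_above P a \<longleftrightarrow> (\<forall>c. P c \<longrightarrow> c 0 < a 0 \<longrightarrow> a 1 < c 1)"

lemma left_points_above_decrease:
  assumes "left_points_above P a"
  shows "left_points_above P (a(1 := a 1 - 1))"
  unfolding left_points_above_def
proof (intro allI impI)
  fix c assume "P c" "c 0 < (a(1 := a 1 - 1)) 0"
  then have "a 1 < c 1" using assms by (simp add: left_points_above_def)
  then show "(a(1 := a 1 - 1)) 1 < c 1" by simp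
qed

lemma left_points_above_step_right:
  assumes "left_points_above P a" and supp: "\<And>c. P c \<Longrightarrow> supp_in 2 c" "supp_in 2 a"
    and not_below: "\<And>c. P c \<Longrightarrow> \<not> c \<le> a"
  shows "left_points_above P (a(0 := a 0 + 1))"
  unfolding left_points_above_def
proof (intro allI impI)
  fix c assume "P c" "c 0 < (a(0 := a 0 + 1)) 0"
  show "(a(0 := a 0 + 1)) 1 < c 1"
  proof (cases "c 0 < a 0")
    case True
    then show ?thesis using assms(1) \<open>P c\<close> by (simp add: left_points_above_def)
  next
    case False
    with \<open>c 0 < (a(0 := a 0 + 1)) 0\<close> have "c 0 \<le> a 0" by simp
    have "\<not> c 1 \<le> a 1"
    proof
      assume "c 1 \<le> a 1"
      with \<open>c 0 \<le> a 0\<close> have "c \<le> a" by (rule supp_in_2_leI[OF supp(1)[OF \<open>P c\<close>] supp(2)])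
      with not_below[OF \<open>P c\<close>] show False by contradiction
    qed
    then show ?thesis by simp
  qed
qed

lemma is_minimal_dim2I:
  fixes P :: "(nat \<Rightarrow> int) \<Rightarrow> bool"
  assumes supp: "\<And>c. P c \<Longrightarrow> supp_in 2 c" and "P b" and "left_points_above P b"
    and not_below: "\<And>c. P c \<Longrightarrow> \<not> c \<le> b(1 := b 1 - 1)"
  shows "is_minimal P b"
  unfolding is_minimal_def
proof (intro conjI allI impI)
  fix c assume "P c" "c \<le> b"
  have "c 0 = b 0"
    using \<open>left_points_above P b\<close> \<open>P c\<close> le_funD[OF \<open>c \<le> b\<close>, of 0] le_funD[OF \<open>c \<le> b\<close>, of 1]
    unfolding left_points_above_def by fastforce
  moreover have "c 1 = b 1"
  proof (rule ccontr)
    assume "c 1 \<noteq> b 1"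
    then have "c \<le> b(1 := b 1 - 1)"
      using \<open>c \<le> b\<close> by (auto simp: le_fun_def) (metis antisym_conv1)
    with not_below[OF \<open>P c\<close>] show False by blast
  qed
  ultimately have "b \<le> c" using supp \<open>P c\<close> \<open>P b\<close> by (simp add: supp_in_2_leI)
  with \<open>c \<le> b\<close> show "c = b" by (rule order.antisym)
qed (rule \<open>P b\<close>)

lemma stair_loop_outputs_minimal_dim2:
  assumes up: "\<And>a c. P a \<Longrightarrow> a \<le> c \<Longrightarrow> in_box 2 lo hi c \<Longrightarrow> P c"
    and supp: "\<And>c. P c \<Longrightarrow> supp_in 2 c" and lower: "\<And>c i. P c \<Longrightarrow> lo i \<le> c i"
    and s: "in_box 2 lo hi s" "s 0 = lo 0"
  shows "\<forall>x\<in>set (stair_loop 2 lo hi P s s []). is_minimal P x"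
proof -
  let ?out_ok = "\<lambda>out. \<forall>x\<in>set out. is_minimal P x"
  let ?Inv = "\<lambda>a b out. ?out_ok out \<and> left_points_above P a
     \<and> (P b \<longrightarrow> in_box 2 lo hi b \<and> left_points_above P b \<and> (b = a \<or> b = a(1 := a 1 + 1)))"
  \<comment> \<open>A point is recorded when the walk has just stepped down out of P.\<close>
  have recorded_minimal: "is_minimal P (a(1 := a 1 + 1))"
    if "P (a(1 := a 1 + 1))" "left_points_above P (a(1 := a 1 + 1))" "\<And>c. P c \<Longrightarrow> \<not> c \<le> a" for a
    using that supp by (intro is_minimal_dim2I) auto
  show ?thesis
  proof (rule stair_loop_invariant[where Inv = ?Inv])
    have "left_points_above P s"
      unfolding left_points_above_def using lower s(2) by (metis not_less)
    with s show "?Inv s s []" by simp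
  next
    fix a b out
    assume "in_box 2 lo hi a" "P a" and inv: "?Inv a b out"
    then show "?Inv (a(2 - 1 := a (2 - 1) - 1)) a out"
      using left_points_above_decrease[of P a] by simp
  next
    fix a b out
    assume a: "in_box 2 lo hi a" "\<not> P a" and inv: "?Inv a b out"
    have not_below: "\<not> c \<le> a" if "P c" for c
      using up[OF that _ a(1)] a(2) by blast
    have "?out_ok (if P b then out @ [b] else out)"
      using inv recorded_minimal[of a] not_below a(2) by auto
    moreover have "left_points_above P (a(0 := a 0 + 1))"
    proof (rule left_points_above_step_right[OF _ supp _ not_below])
      show "left_points_above P a" using inv by blast
      show "supp_in 2 a" using a(1) by (simp add: in_box_def)
    qed
    ultimately show "?Inv (a(2 - 2 := a (2 - 2) + 1)) a (if P b then out @ [b] else out)"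
      using a(2) by simp
  next
    fix a b out
    assume a: "\<not> in_box 2 lo hi a" and inv: "?Inv a b out"
    have "\<not> c \<le> a" if "P c" "P b" for c
    proof
      assume "c \<le> a"
      have b: "in_box 2 lo hi b" "b = a(1 := a 1 + 1)" using inv a \<open>P b\<close> by auto
      then have "supp_in 2 a" "a \<le> b" by (auto simp: in_box_def supp_in_def le_fun_def)
      then have "in_box 2 lo hi a" by (rule in_box_between[OF b(1) _ lower[OF \<open>P c\<close>] \<open>c \<le> a\<close>])
      with a show False ..
    qed
    then show "?out_ok (if P b then out @ [b] else out)"
      using inv a recorded_minimal[of a] by auto
  qed simp
qed

section \<open>Lattice points of r NP(I)\<close>

locale monomial_ideal_power =
  fixes d :: nat and E :: "(nat \<Rightarrow> nat) set" and r :: real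
  assumes dim_pos: "1 \<le> d"
    and monomial_ideal: "monomial_ideal_exps d E"
    and nonempty: "E \<noteq> {}"
    and exponent_nonneg: "0 \<le> r"
begin

lemma finite_min_gens: "finite (min_gens E)"
proof (rule finite_antichain[of "{..<d}"])
  show "\<forall>a\<in>min_gens E. \<forall>j. j \<notin> {..<d} \<longrightarrow> a j = 0"
    using monomial_ideal_exps_supp_in[OF monomial_ideal] by (auto simp: min_gens_def supp_in_def)
  show "\<forall>a\<in>min_gens E. \<forall>b\<in>min_gens E. a \<le> b \<longrightarrow> a = b"
    by (auto simp: min_gens_def le_fun_def)
qed simp

lemma min_gens_nonempty: "min_gens E \<noteq> {}"
  using nonempty ex_min_gens_le[OF monomial_ideal] by blast

lemma coordinates_Vset: "(\<lambda>v. v i) ` Vset E r = (\<lambda>g. \<lceil>r * real (g i)\<rceil>) ` min_gens E"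
  unfolding Vset_def by (simp add: image_image)

lemma minV_le: "g \<in> min_gens E \<Longrightarrow> minV E r i \<le> \<lceil>r * real (g i)\<rceil>"
  unfolding minV_def coordinates_Vset using finite_min_gens by (intro Min_le) auto

lemma maxV_ge: "g \<in> min_gens E \<Longrightarrow> \<lceil>r * real (g i)\<rceil> \<le> maxV E r i"
  unfolding maxV_def coordinates_Vset using finite_min_gens by (intro Max_ge) auto

lemma ex_min_gens_minV: "\<exists>g\<in>min_gens E. minV E r i = \<lceil>r * real (g i)\<rceil>"
proof -
  have "minV E r i \<in> (\<lambda>g. \<lceil>r * real (g i)\<rceil>) ` min_gens E"
    unfolding minV_def coordinates_Vset using finite_min_gens min_gens_nonempty
    by (intro Min_in) auto
  then show ?thesis by auto
qed

lemma minV_nonneg: "0 \<le> minV E r i"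
proof -
  obtain g where "minV E r i = \<lceil>r * real (g i)\<rceil>" using ex_min_gens_minV by blast
  moreover have "0 \<le> r * real (g i)" using exponent_nonneg by simp
  ultimately show ?thesis by simp
qed

lemma minV_le_maxV: "minV E r i \<le> maxV E r i"
  using ex_min_gens_minV[of i] maxV_ge by fastforce

lemma maxV_zero_exponent: "r = 0 \<Longrightarrow> maxV E r i = 0"
  unfolding maxV_def coordinates_Vset using min_gens_nonempty by (simp add: image_constant_conv)

lemma in_rNP_iff: "in_rNP r E a \<longleftrightarrow> (\<exists>x\<in>newton_polyhedron E. \<forall>i. real_of_int (a i) = r * x i)"
  unfolding in_rNP_def scaled_NP_def by (auto simp: fun_eq_iff)

lemma in_rNP_supp_in: "in_rNP r E a \<Longrightarrow> supp_in d a"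
  using newton_polyhedron_supp_in[OF monomial_ideal]
  unfolding in_rNP_iff supp_in_def by (metis mult_zero_right of_int_eq_0_iff)

lemma in_rNP_zero_exponent: "r = 0 \<Longrightarrow> in_rNP r E a \<Longrightarrow> a = (\<lambda>_. 0)"
  unfolding in_rNP_iff by (auto simp: fun_eq_iff)

lemma in_rNP_ge_minV:
  assumes "in_rNP r E a"
  shows "minV E r i \<le> a i"
proof -
  obtain x where x: "x \<in> newton_polyhedron E" and a: "real_of_int (a i) = r * x i"
    using assms unfolding in_rNP_iff by blast
  obtain y where y: "y \<in> newton_polyhedron (min_gens E)" "y \<le> x"
    using newton_polyhedron_ex_min_gens_le[OF monomial_ideal x] by blast
  obtain g where g: "g \<in> min_gens E" "real (g i) \<le> y i"
    using newton_polyhedron_ex_coordinate_le[OF y(1)] by blast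
  have "r * real (g i) \<le> real_of_int (a i)"
    using g(2) le_funD[OF y(2), of i] exponent_nonneg a by (simp add: mult_left_mono)
  then have "\<lceil>r * real (g i)\<rceil> \<le> a i" by (simp add: ceiling_le_iff)
  with minV_le[OF g(1), of i] show ?thesis by linarith
qed

lemma in_rNP_nonneg: "in_rNP r E a \<Longrightarrow> 0 \<le> a i"
  using in_rNP_ge_minV[of a i] minV_nonneg[of i] in_rNP_supp_in[of a]
  by (cases "i < d") (auto simp: supp_in_def)

lemma in_rNP_decrease_above_maxV:
  assumes a: "in_rNP r E a" and "i < d" and above: "maxV E r i < a i"
  shows "in_rNP r E (a(i := a i - 1))"
proof (cases "r = 0")
  case True
  then show ?thesis using in_rNP_zero_exponent[OF True a] above maxV_zero_exponent by simp
next
  case False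
  then have "0 < r" using exponent_nonneg by simp
  obtain x where x: "x \<in> newton_polyhedron E" and a_eq: "\<And>i. real_of_int (a i) = r * x i"
    using a unfolding in_rNP_iff by blast
  obtain y where y: "y \<in> newton_polyhedron (min_gens E)" "y \<le> x"
    using newton_polyhedron_ex_min_gens_le[OF monomial_ideal x] by blast
  obtain g where g: "g \<in> min_gens E" "y i \<le> real (g i)"
    using newton_polyhedron_ex_coordinate_ge[OF y(1)] by blast
  have "r * y i \<le> real_of_int (maxV E r i)"
  proof -
    have "r * y i \<le> r * real (g i)" using g(2) \<open>0 < r\<close> by simp
    also have "\<dots> \<le> real_of_int \<lceil>r * real (g i)\<rceil>" by simp
    also have "\<dots> \<le> real_of_int (maxV E r i)" using maxV_ge[OF g(1)] by simp
    finally show ?thesis .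
  qed
  moreover have "r * y j \<le> real_of_int (a j)" for j
    using le_funD[OF y(2), of j] \<open>0 < r\<close> a_eq[of j] by simp
  ultimately have "(\<lambda>j. r * y j) \<le> (\<lambda>j. real_of_int ((a(i := a i - 1)) j))"
    using above by (auto simp: le_fun_def)
  moreover have "(\<lambda>j. r * y j) \<in> scaled_NP r E"
    using y(1) newton_polyhedron_mono[of "min_gens E" E] unfolding scaled_NP_def
    by (auto simp: min_gens_def)
  moreover have "supp_in d (\<lambda>j. real_of_int ((a(i := a i - 1)) j))"
    using in_rNP_supp_in[OF a] \<open>i < d\<close> by (simp add: supp_in_def)
  ultimately show ?thesis
    unfolding in_rNP_def using scaled_NP_upward_closed[OF monomial_ideal \<open>0 < r\<close>] by blast
qed

lemma in_rNP_upward_closed: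
  assumes a: "in_rNP r E a" and "a \<le> c" and c: "in_box d (minV E r) (maxV E r) c"
  shows "in_rNP r E c"
proof (cases "r = 0")
  case True
  have "c = (\<lambda>_. 0)"
  proof
    fix i show "c i = 0"
      using c in_rNP_nonneg[OF a, of i] le_funD[OF \<open>a \<le> c\<close>, of i]
        maxV_zero_exponent[OF True, of i]
      by (cases "i < d") (auto simp: in_box_def supp_in_def)
  qed
  with a show ?thesis using in_rNP_zero_exponent[OF True a] by simp
next
  case False
  then have "0 < r" using exponent_nonneg by simp
  have "(\<lambda>i. real_of_int (a i)) \<le> (\<lambda>i. real_of_int (c i))"
    using \<open>a \<le> c\<close> by (simp add: le_fun_def)
  moreover have "supp_in d (\<lambda>i. real_of_int (c i))" using c by (simp add: in_box_def supp_in_def)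
  ultimately show ?thesis
    using a scaled_NP_upward_closed[OF monomial_ideal \<open>0 < r\<close>] unfolding in_rNP_def by blast
qed

lemma in_rNP_ceiling:
  assumes "g \<in> E"
  shows "in_rNP r E (\<lambda>i. \<lceil>r * real (g i)\<rceil>)"
proof -
  have "(\<lambda>i. real (g i)) \<in> newton_polyhedron E"
    unfolding newton_polyhedron_def using assms
    by (intro CollectI exI[of _ "{g}"] exI[of _ "\<lambda>_. 1"]) auto
  then have rg: "(\<lambda>i. r * real (g i)) \<in> scaled_NP r E"
    unfolding scaled_NP_def by (rule rev_image_eqI) simp
  show ?thesis
  proof (cases "r = 0")
    case True
    with rg show ?thesis unfolding in_rNP_def by simp
  next
    case False
    then have "0 < r" using exponent_nonneg by simp
    have supp: "supp_in d (\<lambda>i. real_of_int \<lceil>r * real (g i)\<rceil>)"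
      using monomial_ideal_exps_supp_in[OF monomial_ideal assms] by (simp add: supp_in_def)
    show ?thesis unfolding in_rNP_def
      by (rule scaled_NP_upward_closed[OF monomial_ideal \<open>0 < r\<close> rg _ supp]) (simp add: le_fun_def)
  qed
qed

lemma is_minimal_in_hype:
  assumes c: "is_minimal (in_rNP r E) c"
  shows "c \<in> hype d E r"
  unfolding hype_def
proof (intro CollectI conjI allI impI)
  show "supp_in d c" using c in_rNP_supp_in by (simp add: is_minimal_def)
  fix i assume "i < d"
  show "minV E r i \<le> c i" using c in_rNP_ge_minV by (simp add: is_minimal_def)
  show "c i \<le> maxV E r i"
  proof (rule ccontr)
    assume "\<not> c i \<le> maxV E r i"
    then have "in_rNP r E (c(i := c i - 1))"
      using c \<open>i < d\<close> in_rNP_decrease_above_maxV by (simp add: is_minimal_def)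
    with is_minimal_not_decrease[OF c] show False by contradiction
  qed
qed

lemma ex_is_minimal_in_rNP_le:
  assumes "in_rNP r E a"
  shows "\<exists>c. is_minimal (in_rNP r E) c \<and> c \<le> a"
proof (rule ex_is_minimal_le[where m = "\<lambda>c. \<Sum>i<d. nat (c i)"])
  fix x y assume x: "in_rNP r E x" and y: "in_rNP r E y" and "y < x"
  obtain j where j: "y j < x j" using \<open>y < x\<close> by (auto simp: less_fun_def le_fun_def not_le)
  have "j < d"
    using j in_rNP_supp_in[OF x] in_rNP_supp_in[OF y] by (metis supp_in_def not_le order.irrefl)
  show "(\<Sum>i<d. nat (y i)) < (\<Sum>i<d. nat (x i))"
  proof (rule sum_strict_mono_ex1)
    show "\<forall>i\<in>{..<d}. nat (y i) \<le> nat (x i)"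
      using \<open>y < x\<close> by (simp add: le_funD less_imp_le nat_mono)
    show "\<exists>i\<in>{..<d}. nat (y i) < nat (x i)"
      using j \<open>j < d\<close> in_rNP_nonneg[OF y, of j] by (auto intro!: bexI[of _ j])
  qed simp
qed (rule assms)

lemma staircase_dim1:
  assumes "d = 1"
  shows "staircase d E r = Collect (is_minimal (in_rNP r E))"
proof -
  let ?m = "\<lambda>i. if i = 0 then minV E r 0 else 0"
  obtain g where g: "g \<in> min_gens E" "minV E r 0 = \<lceil>r * real (g 0)\<rceil>"
    using ex_min_gens_minV by blast
  have "supp_in 1 g"
    using g(1) monomial_ideal_exps_supp_in[OF monomial_ideal] assms by (simp add: min_gens_def)
  then have "?m = (\<lambda>i. \<lceil>r * real (g i)\<rceil>)"
    using g(2) by (auto simp: fun_eq_iff supp_in_def)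
  then have "in_rNP r E ?m" using in_rNP_ceiling g(1) by (simp add: min_gens_def)
  moreover have "?m \<le> c" if "in_rNP r E c" for c
    using in_rNP_ge_minV[OF that, of 0] in_rNP_nonneg[OF that] by (simp add: le_fun_def)
  ultimately have "is_minimal (in_rNP r E) c \<longleftrightarrow> c = ?m" for c
    by (rule is_minimal_iff_eq_least)
  then show ?thesis using assms unfolding staircase_def by auto
qed

lemma staircase_in_hype:
  assumes "b \<in> staircase d E r"
  shows "in_rNP r E b \<and> b \<in> hype d E r"
proof (cases "d = 1")
  case True
  have "is_minimal (in_rNP r E) b" using assms unfolding staircase_dim1[OF True] by simp
  then show ?thesis using is_minimal_in_hype by (simp add: is_minimal_def)
next
  case False
  then have "2 \<le> d" using dim_pos by simp
  obtain s where "s \<in> start_points d E r"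
    and b: "b \<in> set (stair_loop d (minV E r) (maxV E r) (in_rNP r E) s s [])"
    using assms False unfolding staircase_def by auto
  then have "in_box d (minV E r) (maxV E r) s" by (simp add: start_points_def hype_iff_in_box)
  then have "in_rNP r E b \<and> in_box d (minV E r) (maxV E r) b"
    using stair_loop_outputs_in_box[OF \<open>2 \<le> d\<close>] b by blast
  then show ?thesis by (simp add: hype_iff_in_box)
qed

lemma is_minimal_in_staircase:
  assumes c: "is_minimal (in_rNP r E) c"
  shows "c \<in> staircase d E r"
proof (cases "d = 1")
  case True
  show ?thesis using c unfolding staircase_dim1[OF True] by simp
next
  case False
  then have "2 \<le> d" using dim_pos by simp
  define s where "s = c(d - 2 := minV E r (d - 2), d - 1 := maxV E r (d - 1))"
  have c_box: "in_box d (minV E r) (maxV E r) c"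
    using is_minimal_in_hype[OF c] by (simp add: hype_iff_in_box)
  then have "s \<in> start_points d E r"
    using \<open>2 \<le> d\<close> unfolding start_points_def hype_def s_def in_box_def supp_in_def
    by (auto simp: minV_le_maxV)
  moreover have "c \<in> set (stair_loop d (minV E r) (maxV E r) (in_rNP r E) s s [])"
    using \<open>2 \<le> d\<close> in_rNP_upward_closed c c_box s_def by (rule minimal_in_stair_loop)
  ultimately show ?thesis using False unfolding staircase_def by auto
qed

lemma staircase_dim2:
  assumes "d = 2"
  shows "staircase d E r = Collect (is_minimal (in_rNP r E))"
proof (intro equalityI subsetI CollectI)
  fix b assume "b \<in> staircase d E r"
  then obtain s where s: "s \<in> start_points d E r"
    and b: "b \<in> set (stair_loop 2 (minV E r) (maxV E r) (in_rNP r E) s s [])"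
    using assms unfolding staircase_def by auto
  have "in_box d (minV E r) (maxV E r) s" using s by (simp add: start_points_def hype_iff_in_box)
  moreover have "s 0 = minV E r 0" using s assms by (simp add: start_points_def)
  ultimately show "is_minimal (in_rNP r E) b"
    using stair_loop_outputs_minimal_dim2 b in_rNP_upward_closed in_rNP_supp_in in_rNP_ge_minV
    unfolding assms by blast
qed (use is_minimal_in_staircase in blast)

lemma staircase_eq_minimal:
  "d \<le> 2 \<Longrightarrow> staircase d E r = Collect (is_minimal (in_rNP r E))"
  using staircase_dim1 staircase_dim2 dim_pos by (cases "d = 1") auto

lemma int_closure_exps_iff:
  "c \<in> int_closure_exps d E r \<longleftrightarrow> supp_in d c \<and> (\<exists>b. in_rNP r E b \<and> (\<forall>i. b i \<le> int (c i)))"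
proof -
  have "(\<exists>a. supp_in d a \<and> in_rNP r E (\<lambda>i. int (a i)) \<and> (\<forall>i. a i \<le> c i))
      \<longleftrightarrow> (\<exists>b. in_rNP r E b \<and> (\<forall>i. b i \<le> int (c i)))"
  proof
    assume "\<exists>b. in_rNP r E b \<and> (\<forall>i. b i \<le> int (c i))"
    then obtain b where b: "in_rNP r E b" "\<forall>i. b i \<le> int (c i)" by blast
    have "(\<lambda>i. int (nat (b i))) = b" using in_rNP_nonneg[OF b(1)] by (simp add: fun_eq_iff)
    with b in_rNP_supp_in[OF b(1)]
    show "\<exists>a. supp_in d a \<and> in_rNP r E (\<lambda>i. int (a i)) \<and> (\<forall>i. a i \<le> c i)"
      by (intro exI[of _ "\<lambda>i. nat (b i)"]) (auto simp: supp_in_def nat_le_iff)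
  qed auto
  then show ?thesis unfolding int_closure_exps_def in_rNP_def by simp
qed

lemma min_gens_int_closure_exps_iff:
  "x \<in> min_gens (int_closure_exps d E r) \<longleftrightarrow> is_minimal (in_rNP r E) (\<lambda>i. int (x i))"
proof
  assume x: "x \<in> min_gens (int_closure_exps d E r)"
  then obtain b where b: "in_rNP r E b" "\<forall>i. b i \<le> int (x i)"
    by (auto simp: min_gens_def int_closure_exps_iff)
  have below_x: "c = (\<lambda>i. int (x i))" if "in_rNP r E c" "c \<le> (\<lambda>i. int (x i))" for c
  proof -
    have c_nat: "(\<lambda>i. int (nat (c i))) = c"
      using in_rNP_nonneg[OF that(1)] by (simp add: fun_eq_iff)
    have "(\<lambda>i. nat (c i)) \<in> int_closure_exps d E r"
      using that(1) in_rNP_supp_in[OF that(1)] c_nat unfolding int_closure_exps_iff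
      by (auto simp: supp_in_def)
    moreover have "\<forall>i. nat (c i) \<le> x i" using that(2) by (simp add: le_fun_def nat_le_iff)
    ultimately have "(\<lambda>i. nat (c i)) = x" using x unfolding min_gens_def by force
    with c_nat show ?thesis by auto
  qed
  have "in_rNP r E (\<lambda>i. int (x i))" using below_x[OF b(1)] b by (simp add: le_fun_def)
  with below_x show "is_minimal (in_rNP r E) (\<lambda>i. int (x i))" by (simp add: is_minimal_def)
next
  assume x: "is_minimal (in_rNP r E) (\<lambda>i. int (x i))"
  then have x_in: "x \<in> int_closure_exps d E r"
    using in_rNP_supp_in unfolding is_minimal_def int_closure_exps_iff by (force simp: supp_in_def)
  have "y = x" if y: "y \<in> int_closure_exps d E r" "\<forall>i. y i \<le> x i" for y
  proof -
    obtain b where b: "in_rNP r E b" "\<forall>i. b i \<le> int (y i)"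
      using y(1) unfolding int_closure_exps_iff by blast
    then have "b \<le> (\<lambda>i. int (x i))"
      using y(2) by (simp add: le_fun_def) (meson of_nat_le_iff order_trans)
    then have "b = (\<lambda>i. int (x i))" using x b(1) unfolding is_minimal_def by blast
    with b(2) y(2) show "y = x" by (auto simp: fun_eq_iff intro: order.antisym)
  qed
  with x_in show "x \<in> min_gens (int_closure_exps d E r)" unfolding min_gens_def by blast
qed

lemma staircase_supp_nonneg: "b \<in> staircase d E r \<Longrightarrow> supp_in d b \<and> (\<forall>i. 0 \<le> b i)"
  using staircase_in_hype in_rNP_supp_in in_rNP_nonneg by blast

lemma staircase_generates_int_closure:
  "{c. supp_in d c \<and> (\<exists>b\<in>staircase d E r. \<forall>i. b i \<le> int (c i))} = int_closure_exps d E r"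
proof -
  have "(\<exists>b\<in>staircase d E r. \<forall>i. b i \<le> int (c i)) \<longleftrightarrow> (\<exists>b. in_rNP r E b \<and> (\<forall>i. b i \<le> int (c i)))"
    for c
  proof
    assume "\<exists>b. in_rNP r E b \<and> (\<forall>i. b i \<le> int (c i))"
    then obtain b where "in_rNP r E b" "\<forall>i. b i \<le> int (c i)" by blast
    moreover obtain m where "is_minimal (in_rNP r E) m" "m \<le> b"
      using ex_is_minimal_in_rNP_le[OF \<open>in_rNP r E b\<close>] by blast
    ultimately show "\<exists>b\<in>staircase d E r. \<forall>i. b i \<le> int (c i)"
      using is_minimal_in_staircase by (meson le_funD order_trans)
  qed (use staircase_in_hype in blast)
  then show ?thesis by (auto simp: int_closure_exps_iff)
qed

lemma staircase_eq_min_gens: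
  assumes "d \<le> 2"
  shows "(\<lambda>b i. nat (b i)) ` staircase d E r = min_gens (int_closure_exps d E r)"
proof (intro equalityI subsetI)
  fix x assume "x \<in> (\<lambda>b i. nat (b i)) ` staircase d E r"
  then obtain b where b: "b \<in> staircase d E r" and x: "x = (\<lambda>i. nat (b i))" by blast
  have "(\<lambda>i. int (x i)) = b" using staircase_supp_nonneg[OF b] x by (simp add: fun_eq_iff)
  with b show "x \<in> min_gens (int_closure_exps d E r)"
    using staircase_eq_minimal[OF assms] by (simp add: min_gens_int_closure_exps_iff)
next
  fix x assume "x \<in> min_gens (int_closure_exps d E r)"
  then have "(\<lambda>i. int (x i)) \<in> staircase d E r"
    using is_minimal_in_staircase by (simp add: min_gens_int_closure_exps_iff)
  then show "x \<in> (\<lambda>b i. nat (b i)) ` staircase d E r" by (rule rev_image_eqI) simp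
qed

end

theorem proposition4p9:
  fixes d :: nat and E :: "(nat \<Rightarrow> nat) set" and r :: real
  assumes "d \<ge> 1"
    and "monomial_ideal_exps d E"
    and "E \<noteq> {}"
    and "r \<ge> 0"
  shows "(\<forall>b\<in>staircase d E r. supp_in d b \<and> (\<forall>i. 0 \<le> b i))
    \<and> {c. supp_in d c \<and> (\<exists>b\<in>staircase d E r. \<forall>i. b i \<le> int (c i))} = int_closure_exps d E r
    \<and> (d \<le> 2 \<longrightarrow> (\<lambda>b i. nat (b i)) ` staircase d E r = min_gens (int_closure_exps d E r))"
proof -
  interpret monomial_ideal_power d E r
    using assms by unfold_locales
  show ?thesis
    using staircase_supp_nonneg staircase_generates_int_closure staircase_eq_min_gens by blast
qed

end
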